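(* Let $X$ be a compact metric space and let $f\colon X\to X$ be an inner-distal homeomorphism. If every proximal cell $\mathcal{P}(x)$, $x\in X$, is a meagre subset of $X$, then the set of almost periodic points of $f$ is uncountable and $f$ has uncountably many stable classes.
   Context: The proximal cell of $x$ is $\mathcal{P}(x)=\{y\in X\colon \inf_{n\in\mathbb{Z}} d(f^n(x),f^n(y))=0\}$; $f$ is inner-distal if $\operatorname{Int}\mathcal{P}(x)=\emptyset$ for all $x$. A set is meagre if it is a countable union of nowhere-dense sets (sets whose closure has empty interior). A set $A\subseteq\mathbb{Z}$ is syndetic if $A+F=\mathbb{Z}$ for some finite $F\subseteq\mathbb{Z}$. A point $x$ is (pointwise) almost periodic if for every open neighborhood $U$ of $x$ the set $\{n\in\mathbb{Z}\colon f^n(x)\in U\}$ is syndetic. A stable class is a set of the form $W^s(x)=\{y\in X\colon \lim_{n\to\infty}d(f^n(x),f^n(y))=0\}$ for some $x\in X$. *)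

theory Defs
  imports "HOL-Analysis.Analysis"
begin

definition zit :: "('a \<Rightarrow> 'a) \<Rightarrow> int \<Rightarrow> 'a \<Rightarrow> 'a" where
  "zit f n = (if 0 \<le> n then f ^^ nat n else inv f ^^ nat (- n))"

definition proximal_cell :: "('a::metric_space \<Rightarrow> 'a) \<Rightarrow> 'a \<Rightarrow> 'a set" where
  "proximal_cell f x = {y. (INF n\<in>(UNIV::int set). dist (zit f n x) (zit f n y)) = 0}"

definition inner_distal :: "('a::metric_space \<Rightarrow> 'a) \<Rightarrow> bool" where
  "inner_distal f \<longleftrightarrow> (\<forall>x. interior (proximal_cell f x) = {})"

definition nowhere_dense :: "'a::topological_space set \<Rightarrow> bool" where
  "nowhere_dense A \<longleftrightarrow> interior (closure A) = {}"

definition meagre :: "'a::topological_space set \<Rightarrow> bool" where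
  "meagre A \<longleftrightarrow> (\<exists>\<N>. countable \<N> \<and> (\<forall>N\<in>\<N>. nowhere_dense N) \<and> A = \<Union>\<N>)"

definition syndetic :: "int set \<Rightarrow> bool" where
  "syndetic A \<longleftrightarrow> (\<exists>F. finite F \<and> {a + b | a b. a \<in> A \<and> b \<in> F} = UNIV)"

definition almost_periodic :: "('a::topological_space \<Rightarrow> 'a) \<Rightarrow> 'a \<Rightarrow> bool" where
  "almost_periodic f x \<longleftrightarrow> (\<forall>U. open U \<and> x \<in> U \<longrightarrow> syndetic {n. zit f n x \<in> U})"

definition stable_class :: "('a::metric_space \<Rightarrow> 'a) \<Rightarrow> 'a \<Rightarrow> 'a set" where
  "stable_class f x = {y. ((\<lambda>n. dist ((f ^^ n) x) ((f ^^ n) y)) \<longlonglongrightarrow> 0)}"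

end

(*
  If f had only countably many almost periodic points, consider any orbit closure. It contains a
  minimal set, whose points are all almost periodic, so the minimal set is countable; by Baire's
  theorem a countable compact set has an isolated point, and an isolated point of a minimal set is
  periodic. Hence every point is proximal to a point of a periodic orbit inside its orbit closure,
  and X is the union of countably many meagre proximal cells, contradicting Baire's theorem.
  Stable classes cover X and lie inside proximal cells, so the same contradiction rules out
  countably many stable classes.
*)

theory Submission
  imports Defs
begin

section \<open>Meagre sets\<close>

lemma nowhere_dense_subset: "nowhere_dense B \<Longrightarrow> A \<subseteq> B \<Longrightarrow> nowhere_dense A"
  unfolding nowhere_dense_def by (metis closure_mono interior_mono subset_empty)

lemma meagre_subset:
  assumes "meagre B" "A \<subseteq> B"
  shows "meagre A"
proof -
  obtain \<N> where \<N>: "countable \<N>" "\<forall>N\<in>\<N>. nowhere_dense N" "B = \<Union>\<N>"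
    using assms(1) unfolding meagre_def by blast
  have "countable ((\<lambda>N. N \<inter> A) ` \<N>)" "\<forall>N\<in>(\<lambda>N. N \<inter> A) ` \<N>. nowhere_dense N"
    using \<N> by (auto intro: nowhere_dense_subset [of _ "_ \<inter> A"])
  moreover have "A = \<Union>((\<lambda>N. N \<inter> A) ` \<N>)"
    using \<N>(3) assms(2) by blast
  ultimately show ?thesis
    unfolding meagre_def by blast
qed

lemma meagre_Union:
  assumes "countable \<A>" "\<And>A. A \<in> \<A> \<Longrightarrow> meagre A"
  shows "meagre (\<Union>\<A>)"
proof -
  have "\<forall>A\<in>\<A>. \<exists>\<N>. countable \<N> \<and> (\<forall>N\<in>\<N>. nowhere_dense N) \<and> \<Union>\<N> = A"
    using assms(2) unfolding meagre_def by metis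
  then obtain \<N> where \<N>: "\<forall>A\<in>\<A>. countable (\<N> A) \<and> (\<forall>N\<in>\<N> A. nowhere_dense N) \<and> \<Union>(\<N> A) = A"
    by (rule bchoice [elim_format]) blast
  have "countable (\<Union>A\<in>\<A>. \<N> A)"
    using assms(1) \<N> by (intro countable_UN) auto
  moreover have "\<forall>N\<in>(\<Union>A\<in>\<A>. \<N> A). nowhere_dense N"
    using \<N> by blast
  moreover have "\<Union>(\<Union>A\<in>\<A>. \<N> A) = \<Union>\<A>"
    using \<N> by fastforce
  ultimately show ?thesis
    unfolding meagre_def by metis
qed

lemma compact_UNIV_not_meagre:
  assumes "compact (UNIV :: 'a::metric_space set)"
  shows "\<not> meagre (UNIV :: 'a set)"
proof
  assume "meagre (UNIV :: 'a set)"
  then obtain \<N> :: "'a set set" where \<N>: "countable \<N>" "\<forall>N\<in>\<N>. nowhere_dense N" "\<Union>\<N> = UNIV"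
    unfolding meagre_def by metis
  have "compact_space (euclidean :: 'a topology)"
    using assms by (simp add: compact_space_def)
  then have "euclidean interior_of \<Union>(closure ` \<N>) = {}"
    using \<N> compact_imp_locally_compact_space regular_space_euclidean
    by (intro Baire_category_alt) (auto simp: nowhere_dense_def)
  moreover have "\<Union>(closure ` \<N>) = UNIV"
    using \<N>(3) closure_subset by blast
  ultimately show False
    by simp
qed

lemma compact_UNIV_no_countable_meagre_cover:
  fixes \<A> :: "'a::metric_space set set"
  assumes "compact (UNIV :: 'a set)" "countable \<A>" "\<And>A. A \<in> \<A> \<Longrightarrow> meagre A"
  shows "\<Union>\<A> \<noteq> UNIV"
  using compact_UNIV_not_meagre [OF assms(1)] meagre_Union [OF assms(2,3)] by auto

lemma countable_compact_has_isolated_point: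
  fixes M :: "'a::metric_space set"
  assumes "compact M" "M \<noteq> {}" "countable M"
  shows "\<exists>p\<in>M. \<not> p islimpt M"
proof (rule ccontr)
  assume "\<not> (\<exists>p\<in>M. \<not> p islimpt M)"
  then have no_open_point: "\<not> openin (top_of_set M) {p}" if "p \<in> M" for p
    using that by (auto simp: openin_open islimpt_def)
  have "(top_of_set M) interior_of \<Union>((\<lambda>p. {p}) ` M) = {}"
  proof (rule Baire_category_alt)
    have "compact_space (top_of_set M)"
      using assms(1) by (simp add: compact_space_subtopology)
    then show "completely_metrizable_space (top_of_set M) \<or>
        locally_compact_space (top_of_set M) \<and> regular_space (top_of_set M)"
      using compact_imp_locally_compact_space regular_space_euclidean regular_space_subtopology
      by blast
    show "countable ((\<lambda>p. {p}) ` M)"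
      using assms(3) by simp
    fix T assume "T \<in> (\<lambda>p. {p}) ` M"
    then obtain p where "p \<in> M" "T = {p}"
      by blast
    moreover have "(top_of_set M) interior_of {p} = {}"
      using no_open_point [OF \<open>p \<in> M\<close>] interior_of_subset [of _ "{p}"]
      by (metis openin_interior_of subset_singletonD)
    ultimately show "closedin (top_of_set M) T \<and> (top_of_set M) interior_of T = {}"
      by (simp add: closedin_closed_subtopology)
  qed
  then show False
    using assms(2) by (simp add: interior_of_openin)
qed

section \<open>Integer iterates of a bijection\<close>

lemma homeomorphism_UNIV_bij:
  assumes "homeomorphism UNIV UNIV f g"
  shows "bij f" "inv f = g"
proof -
  have "g \<circ> f = id" "f \<circ> g = id"
    using assms by (auto simp: homeomorphism_def)
  then show "bij f" "inv f = g"
    by (auto intro: o_bij inv_unique_comp)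
qed

lemma zit_0 [simp]: "zit f 0 x = x"
  by (simp add: zit_def)

lemma zit_of_nat: "zit f (int n) = f ^^ n"
  by (simp add: zit_def)

lemma zit_add_one:
  assumes "bij f"
  shows "zit f (n + 1) x = f (zit f n x)"
proof (cases "0 \<le> n")
  case True
  then have "nat (n + 1) = Suc (nat n)"
    by simp
  with True show ?thesis
    by (simp add: zit_def)
next
  case False
  then have "nat (- n) = Suc (nat (- (n + 1)))"
    by simp
  with False show ?thesis
    using assms by (simp add: zit_def bij_is_surj surj_f_inv_f)
qed

lemma zit_add:
  assumes "bij f"
  shows "zit f (m + n) x = zit f m (zit f n x)"
proof (induction m rule: int_induct [where k = 0])
  case base
  then show ?case
    by simp
next
  case (step1 i)
  then show ?case
    using zit_add_one [OF assms, of "i + n"] zit_add_one [OF assms, of i]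
    by (simp add: algebra_simps)
next
  case (step2 i)
  have "f (zit f (i - 1 + n) x) = f (zit f (i - 1) (zit f n x))"
    using step2.IH zit_add_one [OF assms, of "i - 1 + n"] zit_add_one [OF assms, of "i - 1"]
    by (simp add: algebra_simps)
  then show ?case
    using assms by (simp add: algebra_simps bij_is_inj inj_eq)
qed

lemma zit_uminus_cancel:
  assumes "bij f"
  shows "zit f (- n) (zit f n x) = x"
  using zit_add [OF assms, of "- n" n x, symmetric] by simp

lemma zit_period_mult:
  assumes "bij f" and period: "zit f k p = p"
  shows "zit f (k * j) p = p"
proof (induction j rule: int_induct [where k = 0])
  case base
  then show ?case
    by simp
next
  case (step1 i)
  then show ?case
    using zit_add [OF assms(1), of k "k * i" p] period by (simp add: algebra_simps)
next
  case (step2 i)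
  have "zit f (k * (i - 1)) p = zit f (- k) (zit f (k * i) p)"
    using zit_add [OF assms(1), of k "k * (i - 1)" p] zit_uminus_cancel [OF assms(1)]
    by (simp add: algebra_simps)
  also have "\<dots> = p"
    using step2.IH zit_uminus_cancel [OF assms(1), of k p] period by simp
  finally show ?case .
qed

lemma zit_diff_fixed:
  assumes "bij f" "zit f a p = p" "zit f b p = p"
  shows "zit f (b - a) p = p"
proof -
  have "zit f (b - a) p = zit f (b - a) (zit f a p)"
    using assms(2) by simp
  also have "\<dots> = zit f b p"
    by (simp add: zit_add [OF assms(1), symmetric])
  finally show ?thesis
    using assms(3) by simp
qed

lemma continuous_on_funpow:
  fixes f :: "'a::topological_space \<Rightarrow> 'a"
  assumes "continuous_on UNIV f"
  shows "continuous_on UNIV (f ^^ n)"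
proof (induction n)
  case (Suc n)
  have "continuous_on UNIV (f \<circ> f ^^ n)"
    by (rule continuous_on_compose [OF Suc continuous_on_subset [OF assms]]) simp
  then show ?case
    by simp
qed simp

lemma continuous_on_zit:
  assumes "homeomorphism UNIV UNIV f g"
  shows "continuous_on UNIV (zit f n)"
  using assms continuous_on_funpow homeomorphism_UNIV_bij(2) [OF assms]
  unfolding zit_def homeomorphism_def by auto

section \<open>Orbits and minimal sets\<close>

definition orbit :: "('a \<Rightarrow> 'a) \<Rightarrow> 'a \<Rightarrow> 'a set" where
  "orbit f x = range (\<lambda>n. zit f n x)"

definition invariant_set :: "('a \<Rightarrow> 'a) \<Rightarrow> 'a set \<Rightarrow> bool" where
  "invariant_set f S \<longleftrightarrow> (\<forall>x\<in>S. \<forall>n. zit f n x \<in> S)"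

definition minimal_set :: "('a::topological_space \<Rightarrow> 'a) \<Rightarrow> 'a set \<Rightarrow> bool" where
  "minimal_set f M \<longleftrightarrow> closed M \<and> M \<noteq> {} \<and> invariant_set f M \<and>
     (\<forall>S\<subseteq>M. closed S \<and> S \<noteq> {} \<and> invariant_set f S \<longrightarrow> S = M)"

lemma invariant_setD: "invariant_set f S \<Longrightarrow> x \<in> S \<Longrightarrow> zit f n x \<in> S"
  by (simp add: invariant_set_def)

lemma invariant_set_Inter: "(\<And>S. S \<in> \<S> \<Longrightarrow> invariant_set f S) \<Longrightarrow> invariant_set f (\<Inter>\<S>)"
  by (simp add: invariant_set_def)

lemma minimal_setI:
  assumes "closed M" "M \<noteq> {}" "invariant_set f M"
    and "\<And>S. S \<subseteq> M \<Longrightarrow> closed S \<Longrightarrow> S \<noteq> {} \<Longrightarrow> invariant_set f S \<Longrightarrow> S = M"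
  shows "minimal_set f M"
  using assms unfolding minimal_set_def by blast

lemma minimal_setD:
  assumes "minimal_set f M"
  shows "closed M" "M \<noteq> {}" "invariant_set f M"
    and "\<And>S. S \<subseteq> M \<Longrightarrow> closed S \<Longrightarrow> S \<noteq> {} \<Longrightarrow> invariant_set f S \<Longrightarrow> S = M"
  using assms unfolding minimal_set_def by blast+

lemma minimal_set_compact:
  "compact (UNIV :: 'a::topological_space set) \<Longrightarrow> minimal_set f M \<Longrightarrow> compact (M :: 'a set)"
  using compact_Int_closed [of UNIV M] minimal_setD(1) by auto

lemma orbit_self: "x \<in> orbit f x"
  unfolding orbit_def by (metis rangeI zit_0)

lemma orbit_subset: "invariant_set f S \<Longrightarrow> x \<in> S \<Longrightarrow> orbit f x \<subseteq> S"
  by (auto simp: orbit_def invariant_set_def)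

lemma invariant_set_closure_orbit:
  assumes "homeomorphism UNIV UNIV f g"
  shows "invariant_set f (closure (orbit f x))"
  unfolding invariant_set_def
proof (intro ballI allI)
  fix y n assume "y \<in> closure (orbit f x)"
  have "zit f n ` orbit f x \<subseteq> orbit f x"
    unfolding orbit_def using zit_add [OF homeomorphism_UNIV_bij(1) [OF assms], of n _ x, symmetric]
    by auto
  then have "zit f n ` closure (orbit f x) \<subseteq> closure (orbit f x)"
    using continuous_on_subset [OF continuous_on_zit [OF assms] subset_UNIV] closure_subset
    by (intro image_closure_subset) blast+
  with \<open>y \<in> closure (orbit f x)\<close> show "zit f n y \<in> closure (orbit f x)"
    by blast
qed

lemma closed_chain_Inter_nonempty:
  fixes \<C> :: "'a::topological_space set set"
  assumes "compact (UNIV :: 'a set)" "\<And>C. C \<in> \<C> \<Longrightarrow> closed C" "{} \<notin> \<C>"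
    and chain: "\<And>S T. S \<in> \<C> \<Longrightarrow> T \<in> \<C> \<Longrightarrow> S \<subseteq> T \<or> T \<subseteq> S"
  shows "\<Inter>\<C> \<noteq> {}"
proof -
  have "UNIV \<inter> \<Inter>\<C> \<noteq> {}"
  proof (rule compact_imp_fip [OF assms(1)])
    fix \<G> assume "finite \<G>" "\<G> \<subseteq> \<C>"
    show "UNIV \<inter> \<Inter>\<G> \<noteq> {}"
    proof (cases "\<G> = {}")
      case False
      have "subset.chain \<C> \<G>"
        using \<open>\<G> \<subseteq> \<C>\<close> chain by (auto simp: subset_chain_def)
      then have "\<Inter>\<G> \<in> \<G>"
        using Inter_in_chain \<open>finite \<G>\<close> False by blast
      then show ?thesis
        using \<open>\<G> \<subseteq> \<C>\<close> assms(3) by auto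
    qed simp
  qed (use assms(2) in auto)
  then show ?thesis
    by simp
qed

lemma closed_invariant_chain_Inter:
  fixes f :: "'a::topological_space \<Rightarrow> 'a"
  assumes "compact (UNIV :: 'a set)" "\<C> \<noteq> {}"
    and member: "\<And>S. S \<in> \<C> \<Longrightarrow> closed S \<and> S \<noteq> {} \<and> invariant_set f S"
    and chain: "\<And>S T. S \<in> \<C> \<Longrightarrow> T \<in> \<C> \<Longrightarrow> S \<subseteq> T \<or> T \<subseteq> S"
  shows "closed (\<Inter>\<C>) \<and> \<Inter>\<C> \<noteq> {} \<and> invariant_set f (\<Inter>\<C>)"
proof (intro conjI)
  show "closed (\<Inter>\<C>)"
    using member by (intro closed_Inter) blast
  show "\<Inter>\<C> \<noteq> {}"
    using member by (intro closed_chain_Inter_nonempty [OF assms(1) _ _ chain]) auto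
  show "invariant_set f (\<Inter>\<C>)"
    using member by (intro invariant_set_Inter) blast
qed

lemma minimal_set_exists:
  fixes f :: "'a::topological_space \<Rightarrow> 'a"
  assumes "compact (UNIV :: 'a set)" "closed K" "K \<noteq> {}" "invariant_set f K"
  obtains M where "M \<subseteq> K" "minimal_set f M"
proof -
  define \<K> where "\<K> = {S. S \<subseteq> K \<and> closed S \<and> S \<noteq> {} \<and> invariant_set f S}"
  have "\<exists>M\<in>\<K>. \<forall>S\<in>\<K>. S \<subseteq> M \<longrightarrow> S = M"
  proof (rule predicate_Zorn)
    show "partial_order_on \<K> (relation_of (\<lambda>S T. T \<subseteq> S) \<K>)"
      by (rule partial_order_on_relation_ofI) auto
    fix \<C> assume "\<C> \<in> Chains (relation_of (\<lambda>S T. T \<subseteq> S) \<K>)"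
    then have "\<C> \<subseteq> \<K>" and chain: "\<And>S T. S \<in> \<C> \<Longrightarrow> T \<in> \<C> \<Longrightarrow> S \<subseteq> T \<or> T \<subseteq> S"
      by (auto simp: Chains_def relation_of_def)
    \<comment> \<open>Adding K to the chain makes its intersection a lower bound even for the empty chain.\<close>
    let ?T = "\<Inter>(insert K \<C>)"
    have "closed ?T \<and> ?T \<noteq> {} \<and> invariant_set f ?T"
      using \<open>\<C> \<subseteq> \<K>\<close> chain assms(2-4)
      by (intro closed_invariant_chain_Inter [OF assms(1)]) (auto simp: \<K>_def)
    moreover have "?T \<subseteq> K"
      by blast
    ultimately have "?T \<in> \<K>"
      unfolding \<K>_def by blast
    moreover have "\<forall>S\<in>\<C>. ?T \<subseteq> S"
      by blast
    ultimately show "\<exists>T\<in>\<K>. \<forall>S\<in>\<C>. T \<subseteq> S"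
      by (rule bexI [rotated])
  qed
  then obtain M where "M \<in> \<K>" and maximal: "\<forall>S\<in>\<K>. S \<subseteq> M \<longrightarrow> S = M"
    by blast
  show thesis
  proof
    show "M \<subseteq> K"
      using \<open>M \<in> \<K>\<close> by (simp add: \<K>_def)
    show "minimal_set f M"
    proof (rule minimal_setI)
      show "closed M" "M \<noteq> {}" "invariant_set f M"
        using \<open>M \<in> \<K>\<close> by (simp_all add: \<K>_def)
      fix S assume "S \<subseteq> M" "closed S" "S \<noteq> {}" "invariant_set f S"
      then show "S = M"
        using maximal \<open>M \<subseteq> K\<close> unfolding \<K>_def by blast
    qed
  qed
qed

lemma minimal_set_closure_orbit:
  assumes "homeomorphism UNIV UNIV f g" "minimal_set f M" "x \<in> M"
  shows "closure (orbit f x) = M"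
proof (rule minimal_setD(4) [OF assms(2)])
  have "orbit f x \<subseteq> M"
    using orbit_subset [OF minimal_setD(3) [OF assms(2)] assms(3)] .
  then show "closure (orbit f x) \<subseteq> M"
    by (rule closure_minimal [OF _ minimal_setD(1) [OF assms(2)]])
  show "closure (orbit f x) \<noteq> {}"
    using closure_subset [of "orbit f x"] orbit_self [of x f] by blast
  show "invariant_set f (closure (orbit f x))"
    using invariant_set_closure_orbit [OF assms(1)] .
qed simp

lemma minimal_set_orbit_meets_open:
  assumes "homeomorphism UNIV UNIV f g" "minimal_set f M" "x \<in> M" "open U" "U \<inter> M \<noteq> {}"
  obtains n where "zit f n x \<in> U"
proof -
  have "U \<inter> closure (orbit f x) \<noteq> {}"
    using assms(5) minimal_set_closure_orbit [OF assms(1-3)] by simp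
  then have "U \<inter> orbit f x \<noteq> {}"
    using open_Int_closure_eq_empty [OF assms(4)] by blast
  then show thesis
    using that unfolding orbit_def by blast
qed

lemma syndeticI:
  assumes "finite F" "\<And>t. \<exists>c\<in>F. t + c \<in> A"
  shows "syndetic A"
  unfolding syndetic_def
proof (intro exI conjI)
  show "finite (uminus ` F)"
    using assms(1) by simp
  have "t \<in> {a + b |a b. a \<in> A \<and> b \<in> uminus ` F}" for t
  proof -
    obtain c where "c \<in> F" "t + c \<in> A"
      using assms(2) by blast
    moreover have "t = (t + c) + - c"
      by simp
    ultimately show ?thesis
      by blast
  qed
  then show "{a + b |a b. a \<in> A \<and> b \<in> uminus ` F} = UNIV"
    by blast
qed

lemma minimal_set_almost_periodic:
  fixes f :: "'a::metric_space \<Rightarrow> 'a"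
  assumes "compact (UNIV :: 'a set)" and h: "homeomorphism UNIV UNIV f g"
    and M: "minimal_set f M" and "q \<in> M"
  shows "almost_periodic f q"
  unfolding almost_periodic_def
proof (intro allI impI)
  fix U assume "open U \<and> q \<in> U"
  then have "open U" "U \<inter> M \<noteq> {}"
    using \<open>q \<in> M\<close> by blast+
  have "compact M"
    using minimal_set_compact [OF assms(1) M] .
  moreover have "open (zit f n -` U)" for n
    using open_vimage [OF \<open>open U\<close> continuous_on_zit [OF h]] .
  moreover have "M \<subseteq> (\<Union>n. zit f n -` U)"
  proof
    fix m assume "m \<in> M"
    obtain n where "zit f n m \<in> U"
      using minimal_set_orbit_meets_open [OF h M \<open>m \<in> M\<close> \<open>open U\<close> \<open>U \<inter> M \<noteq> {}\<close>] .
    then show "m \<in> (\<Union>n. zit f n -` U)"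
      by blast
  qed
  ultimately obtain C where "finite C" and C: "M \<subseteq> (\<Union>n\<in>C. zit f n -` U)"
    by (rule compactE_image)
  show "syndetic {n. zit f n q \<in> U}"
  proof (rule syndeticI [OF \<open>finite C\<close>])
    fix t
    obtain c where "c \<in> C" "zit f c (zit f t q) \<in> U"
      using C invariant_setD [OF minimal_setD(3) [OF M] \<open>q \<in> M\<close>] by blast
    then have "zit f (t + c) q \<in> U"
      by (simp add: zit_add [OF homeomorphism_UNIV_bij(1) [OF h]] add.commute)
    then show "\<exists>c\<in>C. t + c \<in> {n. zit f n q \<in> U}"
      using \<open>c \<in> C\<close> by blast
  qed
qed

lemma compact_invariant_set_forward_limit:
  fixes M :: "'a::metric_space set"
  assumes "compact M" "invariant_set f M" "p \<in> M"
  obtains l r where "l \<in> M" "strict_mono r" "(\<lambda>i. zit f (int (r i)) p) \<longlonglongrightarrow> l"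
proof -
  have "\<forall>i. zit f (int i) p \<in> M"
    using invariant_setD [OF assms(2,3)] by blast
  then obtain l r where "l \<in> M" "strict_mono r" "((\<lambda>i. zit f (int i) p) \<circ> r) \<longlonglongrightarrow> l"
    using seq_compactE [OF compact_imp_seq_compact [OF assms(1)]] by metis
  then show thesis
    using that by (simp add: o_def)
qed

lemma minimal_set_isolated_point_periodic:
  fixes f :: "'a::metric_space \<Rightarrow> 'a"
  assumes "compact (UNIV :: 'a set)" and h: "homeomorphism UNIV UNIV f g"
    and M: "minimal_set f M" and "p \<in> M" "\<not> p islimpt M"
  obtains k where "k > 0" "zit f k p = p"
proof -
  \<comment> \<open>A limit point l of the forward orbit of p has p in its own orbit, because p is isolated in
    M = closure (orbit f l); so the forward orbit of p accumulates at p and, p being isolated,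
    returns to p exactly at two different times.\<close>
  have bij: "bij f"
    using homeomorphism_UNIV_bij(1) [OF h] .
  obtain V where "open V" "p \<in> V" and V: "\<And>y. y \<in> M \<Longrightarrow> y \<in> V \<Longrightarrow> y = p"
    using \<open>\<not> p islimpt M\<close> unfolding islimpt_def by blast
  have in_M: "zit f n y \<in> M" if "y \<in> M" for n y
    using invariant_setD [OF minimal_setD(3) [OF M] that] .
  obtain l r where "l \<in> M" "strict_mono r" and lim: "(\<lambda>i. zit f (int (r i)) p) \<longlonglongrightarrow> l"
    using compact_invariant_set_forward_limit [OF minimal_set_compact [OF assms(1) M]
        minimal_setD(3) [OF M] \<open>p \<in> M\<close>] .
  obtain j where "zit f j l \<in> V"
    using minimal_set_orbit_meets_open [OF h M \<open>l \<in> M\<close> \<open>open V\<close>] \<open>p \<in> M\<close> \<open>p \<in> V\<close> by blast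
  then have "zit f j l = p"
    using V in_M [OF \<open>l \<in> M\<close>] by blast
  have "isCont (zit f j) l"
    using continuous_on_zit [OF h] by (simp add: continuous_on_eq_continuous_at)
  then have "(\<lambda>i. zit f j (zit f (int (r i)) p)) \<longlonglongrightarrow> p"
    using isCont_tendsto_compose [OF _ lim] \<open>zit f j l = p\<close> by metis
  then have "eventually (\<lambda>i. zit f j (zit f (int (r i)) p) \<in> V) sequentially"
    using \<open>open V\<close> \<open>p \<in> V\<close> by (rule topological_tendstoD)
  then obtain N where N: "\<And>i. i \<ge> N \<Longrightarrow> zit f j (zit f (int (r i)) p) \<in> V"
    unfolding eventually_sequentially by blast
  have return: "zit f (j + int (r i)) p = p" if "i \<ge> N" for i
  proof -
    have "zit f (j + int (r i)) p \<in> V"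
      using N [OF that] by (simp add: zit_add [OF bij])
    then show ?thesis
      using V in_M [OF \<open>p \<in> M\<close>] by blast
  qed
  show thesis
  proof
    show "(j + int (r (Suc N))) - (j + int (r N)) > 0"
      using \<open>strict_mono r\<close> by (simp add: strict_mono_def)
    show "zit f ((j + int (r (Suc N))) - (j + int (r N))) p = p"
      using zit_diff_fixed [OF bij return return] by simp
  qed
qed

section \<open>Proximality\<close>

lemma proximal_cell_iff:
  "y \<in> proximal_cell f x \<longleftrightarrow> (\<forall>e>0. \<exists>n. dist (zit f n x) (zit f n y) < e)"
proof -
  let ?d = "\<lambda>n. dist (zit f n x) (zit f n y)"
  have "bdd_below (range ?d)"
    by (rule bdd_belowI [of _ 0]) auto
  then have less_iff: "(INF n. ?d n) < e \<longleftrightarrow> (\<exists>n. ?d n < e)" for e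
    by (simp add: cINF_less_iff)
  have "(INF n. ?d n) \<ge> 0"
    by (rule cINF_greatest) auto
  then have "(INF n. ?d n) = 0 \<longleftrightarrow> (\<forall>e>0. (INF n. ?d n) < e)"
    by (metis less_irrefl order.order_iff_strict)
  then show ?thesis
    unfolding proximal_cell_def less_iff by simp
qed

lemma stable_class_self: "x \<in> stable_class f x"
  by (simp add: stable_class_def)

lemma stable_class_subset_proximal_cell: "stable_class f x \<subseteq> proximal_cell f x"
proof
  fix y assume "y \<in> stable_class f x"
  then have lim: "(\<lambda>n. dist ((f ^^ n) x) ((f ^^ n) y)) \<longlonglongrightarrow> 0"
    by (simp add: stable_class_def)
  show "y \<in> proximal_cell f x"
    unfolding proximal_cell_iff
  proof (intro allI impI)
    fix e :: real assume "e > 0"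
    obtain n where "dist ((f ^^ n) x) ((f ^^ n) y) < e"
      using order_tendstoD(2) [OF lim \<open>e > 0\<close>] unfolding eventually_sequentially by blast
    then have "dist (zit f (int n) x) (zit f (int n) y) < e"
      by (simp add: zit_of_nat)
    then show "\<exists>n. dist (zit f n x) (zit f n y) < e"
      by blast
  qed
qed

lemma finite_all_pos_bex_swap:
  fixes P :: "'b \<Rightarrow> real \<Rightarrow> bool"
  assumes "finite R" and small: "\<And>e. e > 0 \<Longrightarrow> \<exists>r\<in>R. P r e"
    and mono: "\<And>r e e'. P r e \<Longrightarrow> e \<le> e' \<Longrightarrow> P r e'"
  shows "\<exists>r\<in>R. \<forall>e>0. P r e"
proof (rule ccontr)
  assume "\<not> (\<exists>r\<in>R. \<forall>e>0. P r e)"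
  then obtain \<epsilon> where \<epsilon>: "\<And>r. r \<in> R \<Longrightarrow> \<epsilon> r > 0 \<and> \<not> P r (\<epsilon> r)"
    by metis
  define e where "e = Min (insert 1 (\<epsilon> ` R))"
  have "e > 0"
    using \<epsilon> \<open>finite R\<close> by (simp add: e_def)
  then obtain r where "r \<in> R" "P r e"
    using small by blast
  moreover have "e \<le> \<epsilon> r"
    using \<open>r \<in> R\<close> \<open>finite R\<close> by (simp add: e_def)
  ultimately show False
    using \<epsilon> mono by blast
qed

lemma periodic_orbit_closure_proximal:
  assumes "bij f" "k > 0" "zit f k p = p" "p \<in> closure (orbit f y)"
  obtains r where "y \<in> proximal_cell f (zit f r p)"
proof -
  have "\<exists>r\<in>{-k<..0}. \<exists>n. dist (zit f n (zit f r p)) (zit f n y) < e" if "e > 0" for e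
  proof -
    obtain n where "dist (zit f n y) p < e"
      using assms(4) \<open>e > 0\<close> by (auto simp: closure_approachable orbit_def)
    \<comment> \<open>At time n the shifted point of the periodic orbit is back at p, close to the orbit of y;
      only k shifts occur, so one of them works for all e.\<close>
    have "zit f n (zit f (- (n mod k)) p) = zit f (k * (n div k)) p"
      by (simp add: zit_add [OF assms(1), symmetric] minus_mod_eq_mult_div [symmetric] algebra_simps)
    also have "\<dots> = p"
      using zit_period_mult [OF assms(1,3)] .
    finally have "dist (zit f n (zit f (- (n mod k)) p)) (zit f n y) < e"
      using \<open>dist (zit f n y) p < e\<close> by (simp add: dist_commute)
    moreover have "- (n mod k) \<in> {-k<..0}"
      using \<open>k > 0\<close> by simp
    ultimately show ?thesis
      by blast
  qed
  then have "\<exists>r\<in>{-k<..0}. \<forall>e>0. \<exists>n. dist (zit f n (zit f r p)) (zit f n y) < e"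
    by (intro finite_all_pos_bex_swap) (auto intro: less_le_trans)
  then obtain r where "\<forall>e>0. \<exists>n. dist (zit f n (zit f r p)) (zit f n y) < e"
    by blast
  then show thesis
    using that by (simp add: proximal_cell_iff)
qed

lemma proximal_to_almost_periodic_point:
  fixes f :: "'a::metric_space \<Rightarrow> 'a"
  assumes "compact (UNIV :: 'a set)" and h: "homeomorphism UNIV UNIV f g"
    and "countable {x. almost_periodic f x}"
  obtains q where "almost_periodic f q" "y \<in> proximal_cell f q"
proof -
  have nonempty: "closure (orbit f y) \<noteq> {}"
    using closure_subset [of "orbit f y"] orbit_self [of y f] by blast
  obtain M where "M \<subseteq> closure (orbit f y)" and M: "minimal_set f M"
    using minimal_set_exists [OF assms(1) closed_closure nonempty invariant_set_closure_orbit [OF h]] .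
  have almost_periodic: "almost_periodic f x" if "x \<in> M" for x
    using minimal_set_almost_periodic [OF assms(1) h M that] .
  then have "countable M"
    using countable_subset [OF _ assms(3), of M] by blast
  moreover have "compact M"
    using minimal_set_compact [OF assms(1) M] .
  ultimately obtain p where "p \<in> M" "\<not> p islimpt M"
    using countable_compact_has_isolated_point [OF _ minimal_setD(2) [OF M]] by blast
  then obtain k where "k > 0" "zit f k p = p"
    by (rule minimal_set_isolated_point_periodic [OF assms(1) h M])
  moreover have "p \<in> closure (orbit f y)"
    using \<open>p \<in> M\<close> \<open>M \<subseteq> closure (orbit f y)\<close> by blast
  ultimately obtain r where "y \<in> proximal_cell f (zit f r p)"
    by (rule periodic_orbit_closure_proximal [OF homeomorphism_UNIV_bij(1) [OF h]])
  moreover have "zit f r p \<in> M"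
    using invariant_setD [OF minimal_setD(3) [OF M] \<open>p \<in> M\<close>] .
  ultimately show thesis
    using that almost_periodic by blast
qed

theorem theorem2p17:
  fixes f :: "'a::metric_space \<Rightarrow> 'a"
  assumes "compact (UNIV :: 'a set)"
    and "\<exists>g. homeomorphism UNIV UNIV f g"
    and "inner_distal f"
    and "\<forall>x. meagre (proximal_cell f x)"
  shows "uncountable {x. almost_periodic f x} \<and> uncountable (range (stable_class f))"
proof
  obtain g where h: "homeomorphism UNIV UNIV f g"
    using assms(2) by blast
  show "uncountable {x. almost_periodic f x}"
  proof
    assume countable: "countable {x. almost_periodic f x}"
    have "\<Union>(proximal_cell f ` {x. almost_periodic f x}) \<noteq> UNIV"
      using countable assms(4) by (intro compact_UNIV_no_countable_meagre_cover [OF assms(1)]) auto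
    moreover have "y \<in> \<Union>(proximal_cell f ` {x. almost_periodic f x})" for y
      using proximal_to_almost_periodic_point [OF assms(1) h countable, of y] by blast
    ultimately show False
      by (metis UNIV_eq_I)
  qed
  show "uncountable (range (stable_class f))"
  proof
    assume countable: "countable (range (stable_class f))"
    have "meagre (stable_class f x)" for x
      using meagre_subset [OF spec [OF assms(4)] stable_class_subset_proximal_cell] .
    then have "\<Union>(range (stable_class f)) \<noteq> UNIV"
      using countable by (intro compact_UNIV_no_countable_meagre_cover [OF assms(1)]) auto
    moreover have "y \<in> \<Union>(range (stable_class f))" for y
      using stable_class_self [of y f] by blast
    ultimately show False
      by (metis UNIV_eq_I)
  qed
qed

end
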